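(* Assume the demand is i.i.d. with pmf $P_X$. Let $\theta\in\mathcal P_S$ and $\xi(w)=\sum_{(x,s):s-x=w}P_X(x)\theta(s)$. Then the structured policy $\mathbf b=(b,b,\dots)$ with respect to $(\theta,\xi)$ is an invariant policy for the initial battery distribution $\theta$.
   Context: $\mathcal X=\{0,\dots,m_x\}$, $\mathcal Y=\{0,\dots,m_y\}$, $\mathcal S=\{0,\dots,m_s\}$ with $m_x\le m_y$; $\mathcal W=\{s-x\}$; $\mathcal P_S$ the pmfs on $\mathcal S$; $\mathcal Y_\circ(w)=\{y\in\mathcal Y:w+y\in\mathcal S\}$. Demand $X_t$ i.i.d. $\sim P_X$ independent of $S_1$. A constant-distribution policy $b$ (conditional pmf with $b(\mathcal Y_\circ(w)\mid w)=1$) draws $Y_t\sim b(\cdot\mid W_t)$, $W_t=S_t-X_t$, $S_{t+1}=S_t+Y_t-X_t$. The structured policy with respect to $(\theta,\xi)$ is $b(y\mid w)=P_X(y)\theta(y+w)/\xi(w)$ for $y\in\mathcal X\cap\mathcal Y_\circ(w)$ and $0$ otherwise (when $\xi(w)=0$, $b(\cdot\mid w)$ is an arbitrary pmf on $\mathcal Y_\circ(w)$; such $w$ occur with probability zero). With $\theta_t(s)=P(S_t=s\mid Y^{t-1}=y^{t-1})$ and $\xi_t(w)=P(W_t=w\mid Y^{t-1}=y^{t-1})$, $b$ is invariant for initial distribution $\theta_1$ (i.e. when $S_1\sim\theta_1$) if $\theta_t=\theta_1$ and $\xi_t=\xi_1$ for all $t$, where $\xi_1(w)=\sum_{(x,s):s-x=w}P_X(x)\theta_1(s)$.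 *)

theory Defs
  imports "HOL-Probability.Probability"
begin

text \<open>Values of demand X, energy Y, battery state S are integers; W = S - X may be negative.
  The alphabets are X = {0..mx}, Y = {0..my}, S = {0..ms}.\<close>

definition Yo :: "nat \<Rightarrow> nat \<Rightarrow> int \<Rightarrow> int set" where
  "Yo my ms w = {y. 0 \<le> y \<and> y \<le> int my \<and> 0 \<le> w + y \<and> w + y \<le> int ms}"

definition Wset :: "nat \<Rightarrow> nat \<Rightarrow> int set" where
  "Wset mx ms = {s - x | s x. 0 \<le> s \<and> s \<le> int ms \<and> 0 \<le> x \<and> x \<le> int mx}"

definition xi :: "int pmf \<Rightarrow> int pmf \<Rightarrow> int \<Rightarrow> real" where
  "xi PX \<theta> w = pmf (map_pmf (\<lambda>(x, s). s - x) (pair_pmf PX \<theta>)) w"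

definition structured_policy ::
  "nat \<Rightarrow> nat \<Rightarrow> nat \<Rightarrow> int pmf \<Rightarrow> int pmf \<Rightarrow> (int \<Rightarrow> int pmf) \<Rightarrow> bool" where
  "structured_policy mx my ms PX \<theta> b \<longleftrightarrow>
     (\<forall>w \<in> Wset mx ms.
        set_pmf (b w) \<subseteq> Yo my ms w \<and>
        (xi PX \<theta> w \<noteq> 0 \<longrightarrow>
           (\<forall>y. pmf (b w) y =
                 (if y \<in> {0..int mx} \<inter> Yo my ms w
                  then pmf PX y * pmf \<theta> (y + w) / xi PX \<theta> w else 0))))"

text \<open>Trajectory of the system started in battery state s: list of (S_t, X_t, Y_t), t = 1..n.
  X_t ~ P_X fresh (i.i.d.), Y_t ~ b(. | W_t) with W_t = S_t - X_t, S_{t+1} = S_t + Y_t - X_t.\<close>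
fun run :: "int pmf \<Rightarrow> (int \<Rightarrow> int pmf) \<Rightarrow> nat \<Rightarrow> int \<Rightarrow> (int \<times> int \<times> int) list pmf" where
  "run PX b 0 s = return_pmf []"
| "run PX b (Suc n) s =
     bind_pmf PX (\<lambda>x. bind_pmf (b (s - x)) (\<lambda>y.
       map_pmf (\<lambda>rest. (s, x, y) # rest) (run PX b n (s + y - x))))"

definition traj :: "int pmf \<Rightarrow> (int \<Rightarrow> int pmf) \<Rightarrow> int pmf \<Rightarrow> nat \<Rightarrow> (int \<times> int \<times> int) list pmf" where
  "traj PX b \<theta>1 n = bind_pmf \<theta>1 (run PX b n)"

text \<open>Y^{t-1} of a trajectory of length t (t \<ge> 1); S_t and W_t are read off entry t-1.\<close>
definition Ypast :: "nat \<Rightarrow> (int \<times> int \<times> int) list \<Rightarrow> int list" where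
  "Ypast t tr = map (\<lambda>(s, x, y). y) (take (t - 1) tr)"

definition S_at :: "nat \<Rightarrow> (int \<times> int \<times> int) list \<Rightarrow> int" where
  "S_at t tr = fst (tr ! (t - 1))"

definition W_at :: "nat \<Rightarrow> (int \<times> int \<times> int) list \<Rightarrow> int" where
  "W_at t tr = fst (tr ! (t - 1)) - fst (snd (tr ! (t - 1)))"

definition theta_t :: "int pmf \<Rightarrow> (int \<Rightarrow> int pmf) \<Rightarrow> int pmf \<Rightarrow> nat \<Rightarrow> int list \<Rightarrow> int \<Rightarrow> real" where
  "theta_t PX b \<theta>1 t ys s =
     measure_pmf.prob (traj PX b \<theta>1 t) {tr. S_at t tr = s \<and> Ypast t tr = ys}
     / measure_pmf.prob (traj PX b \<theta>1 t) {tr. Ypast t tr = ys}"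

definition xi_t :: "int pmf \<Rightarrow> (int \<Rightarrow> int pmf) \<Rightarrow> int pmf \<Rightarrow> nat \<Rightarrow> int list \<Rightarrow> int \<Rightarrow> real" where
  "xi_t PX b \<theta>1 t ys w =
     measure_pmf.prob (traj PX b \<theta>1 t) {tr. W_at t tr = w \<and> Ypast t tr = ys}
     / measure_pmf.prob (traj PX b \<theta>1 t) {tr. Ypast t tr = ys}"

definition invariant_policy :: "int pmf \<Rightarrow> (int \<Rightarrow> int pmf) \<Rightarrow> int pmf \<Rightarrow> bool" where
  "invariant_policy PX b \<theta>1 \<longleftrightarrow>
     (\<forall>t \<ge> 1. \<forall>ys. length ys = t - 1 \<longrightarrow>
        measure_pmf.prob (traj PX b \<theta>1 t) {tr. Ypast t tr = ys} > 0 \<longrightarrow>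
        (\<forall>s. theta_t PX b \<theta>1 t ys s = pmf \<theta>1 s) \<and>
        (\<forall>w. xi_t PX b \<theta>1 t ys w = xi PX \<theta>1 w))"

end

theory Submission
  imports Defs
begin

text \<open>Under the structured policy, Bayes' rule gives \<xi>(w) b(y|w) = P_X(y) \<theta>(w + y).
  Since S_(t+1) = W_t + Y_t, this says that if S_t ~ \<theta> then the output Y_t and the next state
  S_(t+1) are independent with laws P_X and \<theta>. By induction on t the past outputs Y^(t-1) are
  therefore independent of (S_t, X_t, Y_t), whose law is always that of the first step, so
  conditioning on Y^(t-1) leaves the laws of S_t and W_t unchanged.\<close>

definition xi_pmf :: "int pmf \<Rightarrow> int pmf \<Rightarrow> int pmf" where
  "xi_pmf PX \<theta> = map_pmf (\<lambda>(x, s). s - x) (pair_pmf PX \<theta>)"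

lemma pmf_xi_pmf: "pmf (xi_pmf PX \<theta>) w = xi PX \<theta> w"
  by (simp add: xi_pmf_def xi_def)

lemma pmf_mult_le_xi: "pmf PX y * pmf \<theta> (w + y) \<le> xi PX \<theta> w"
proof -
  have "pmf PX y * pmf \<theta> (w + y) = measure_pmf.prob (pair_pmf PX \<theta>) {(y, w + y)}"
    by (simp add: measure_pmf_single pmf_pair)
  also have "\<dots> \<le> measure_pmf.prob (pair_pmf PX \<theta>) ((\<lambda>(x, s). s - x) -` {w})"
    by (rule measure_pmf.finite_measure_mono) auto
  also have "\<dots> = xi PX \<theta> w"
    by (simp add: xi_def pmf_map)
  finally show ?thesis .
qed

lemma set_xi_pmf_subset_Wset:
  assumes "set_pmf PX \<subseteq> {0..int mx}" and "set_pmf \<theta> \<subseteq> {0..int ms}"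
  shows "set_pmf (xi_pmf PX \<theta>) \<subseteq> Wset mx ms"
  using assms by (fastforce simp: xi_pmf_def Wset_def)

lemma structured_policy_bayes:
  assumes "mx \<le> my"
    and PX: "set_pmf PX \<subseteq> {0..int mx}"
    and \<theta>: "set_pmf \<theta> \<subseteq> {0..int ms}"
    and b: "structured_policy mx my ms PX \<theta> b"
  shows "xi PX \<theta> w * pmf (b w) y = pmf PX y * pmf \<theta> (w + y)"
proof (cases "xi PX \<theta> w = 0")
  case True
  with pmf_mult_le_xi[of PX y \<theta> w] show ?thesis
    by (simp add: order.antisym)
next
  case False
  then have "w \<in> Wset mx ms"
    using set_xi_pmf_subset_Wset[OF PX \<theta>] by (auto simp: set_pmf_iff pmf_xi_pmf)
  with False b have b_w: "pmf (b w) y = (if y \<in> {0..int mx} \<inter> Yo my ms w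
      then pmf PX y * pmf \<theta> (y + w) / xi PX \<theta> w else 0)"
    unfolding structured_policy_def by blast
  have "pmf PX y * pmf \<theta> (w + y) = 0" if "y \<notin> {0..int mx} \<inter> Yo my ms w"
  proof (rule ccontr)
    assume "pmf PX y * pmf \<theta> (w + y) \<noteq> 0"
    then have "y \<in> set_pmf PX" "w + y \<in> set_pmf \<theta>" by (auto simp: set_pmf_iff)
    with PX \<theta> \<open>mx \<le> my\<close> that show False by (auto simp: Yo_def)
  qed
  with False b_w show ?thesis by (auto simp: add.commute)
qed

definition step_pmf :: "int pmf \<Rightarrow> (int \<Rightarrow> int pmf) \<Rightarrow> int pmf \<Rightarrow> (int \<times> int \<times> int) pmf" where
  "step_pmf PX b \<theta> = bind_pmf \<theta> (\<lambda>s. bind_pmf PX (\<lambda>x. map_pmf (\<lambda>y. (s, x, y)) (b (s - x))))"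

lemma map_step_pmf_state: "map_pmf fst (step_pmf PX b \<theta>) = \<theta>"
  unfolding step_pmf_def by (simp add: map_bind_pmf map_pmf_comp bind_return_pmf' bind_pmf_const)

lemma map_step_pmf_net_state: "map_pmf (\<lambda>(s, x, y). s - x) (step_pmf PX b \<theta>) = xi_pmf PX \<theta>"
proof -
  have "map_pmf (\<lambda>(s, x, y). s - x) (step_pmf PX b \<theta>) =
        bind_pmf \<theta> (\<lambda>s. bind_pmf PX (\<lambda>x. return_pmf (s - x)))"
    unfolding step_pmf_def by (simp add: map_bind_pmf map_pmf_comp)
  also have "\<dots> = bind_pmf PX (\<lambda>x. bind_pmf \<theta> (\<lambda>s. return_pmf (s - x)))"
    by (rule bind_commute_pmf)
  finally show ?thesis
    unfolding xi_pmf_def pair_pmf_def by (simp add: map_bind_pmf bind_assoc_pmf bind_return_pmf)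
qed

lemma map_step_pmf_output_next_state:
  "map_pmf (\<lambda>(s, x, y). (y, s + y - x)) (step_pmf PX b \<theta>) =
   bind_pmf (xi_pmf PX \<theta>) (\<lambda>w. map_pmf (\<lambda>y. (y, w + y)) (b w))"
proof -
  have "map_pmf (\<lambda>(s, x, y). (y, s + y - x)) (step_pmf PX b \<theta>) =
        bind_pmf \<theta> (\<lambda>s. bind_pmf PX (\<lambda>x. map_pmf (\<lambda>y. (y, (s - x) + y)) (b (s - x))))"
    unfolding step_pmf_def by (simp add: map_bind_pmf map_pmf_comp algebra_simps)
  also have "\<dots> = bind_pmf PX (\<lambda>x. bind_pmf \<theta> (\<lambda>s. map_pmf (\<lambda>y. (y, (s - x) + y)) (b (s - x))))"
    by (rule bind_commute_pmf)
  finally show ?thesis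
    unfolding xi_pmf_def pair_pmf_def by (simp add: bind_map_pmf bind_assoc_pmf bind_return_pmf)
qed

lemma pmf_bind_map_shift_graph:
  fixes M :: "'a::ab_group_add pmf" and K :: "'a \<Rightarrow> 'a pmf"
  shows "pmf (bind_pmf M (\<lambda>w. map_pmf (\<lambda>y. (y, w + y)) (K w))) (y, s) =
         pmf M (s - y) * pmf (K (s - y)) y"
proof -
  have "(\<lambda>y. (y, w + y)) -` {(y, s)} = (if w = s - y then {y} else {})" for w
    by (auto simp: eq_diff_eq)
  then have "pmf (map_pmf (\<lambda>y. (y, w + y)) (K w)) (y, s) = pmf (K (s - y)) y * indicator {s - y} w" for w
    by (simp add: pmf_map measure_pmf_single)
  then show ?thesis
    by (simp add: pmf_bind measure_pmf_single mult.commute)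
qed

lemma structured_policy_output_next_state:
  assumes "mx \<le> my"
    and "set_pmf PX \<subseteq> {0..int mx}"
    and "set_pmf \<theta> \<subseteq> {0..int ms}"
    and "structured_policy mx my ms PX \<theta> b"
  shows "map_pmf (\<lambda>(s, x, y). (y, s + y - x)) (step_pmf PX b \<theta>) = pair_pmf PX \<theta>"
proof (rule pmf_eqI)
  fix z :: "int \<times> int"
  obtain y s where z: "z = (y, s)" by fastforce
  show "pmf (map_pmf (\<lambda>(s, x, y). (y, s + y - x)) (step_pmf PX b \<theta>)) z = pmf (pair_pmf PX \<theta>) z"
    using structured_policy_bayes[OF assms, of "s - y" y]
    by (simp add: z map_step_pmf_output_next_state pmf_bind_map_shift_graph pmf_xi_pmf pmf_pair)
qed

definition past_and_current :: "nat \<Rightarrow> (int \<times> int \<times> int) list \<Rightarrow> int list \<times> (int \<times> int \<times> int)" where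
  "past_and_current t tr = (Ypast t tr, tr ! (t - 1))"

lemma past_and_current_Cons:
  "t \<ge> 1 \<Longrightarrow> past_and_current (Suc t) ((s, x, y) # tr) =
     (y # fst (past_and_current t tr), snd (past_and_current t tr))"
  by (cases t) (auto simp: past_and_current_def Ypast_def)

lemma traj_Suc:
  "traj PX b \<theta> (Suc t) =
   bind_pmf (step_pmf PX b \<theta>) (\<lambda>(s, x, y). map_pmf ((#) (s, x, y)) (run PX b t (s + y - x)))"
  unfolding traj_def step_pmf_def by (simp add: bind_map_pmf bind_assoc_pmf cong: bind_pmf_cong)

text \<open>Since S_(t+1) ~ \<theta> independently of Y_t, a trajectory of length t + 1 is Y_t prepended to
  a fresh trajectory of length t started in \<theta>.\<close>
lemma past_independent_of_current:
  assumes indep: "map_pmf (\<lambda>(s, x, y). (y, s + y - x)) (step_pmf PX b \<theta>) = pair_pmf PX \<theta>"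
    and "t \<ge> 1"
  shows "\<exists>D. map_pmf (past_and_current t) (traj PX b \<theta> t) = pair_pmf D (step_pmf PX b \<theta>)"
  using \<open>t \<ge> 1\<close>
proof (induction t rule: nat_induct_at_least)
  case base
  have "map_pmf (past_and_current 1) (traj PX b \<theta> 1) = map_pmf (Pair []) (step_pmf PX b \<theta>)"
    unfolding One_nat_def traj_Suc
    by (simp add: map_bind_pmf past_and_current_def Ypast_def case_prod_beta map_pmf_comp
        map_pmf_def bind_assoc_pmf bind_return_pmf)
  then show ?case
    by (metis pair_return_pmf1)
next
  case (Suc t)
  then obtain D where D: "map_pmf (past_and_current t) (traj PX b \<theta> t) = pair_pmf D (step_pmf PX b \<theta>)"
    by blast
  define prepend where "prepend y p = (y # fst p, snd p)"
    for y :: int and p :: "int list \<times> (int \<times> int \<times> int)"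
  have "map_pmf (past_and_current (Suc t)) (traj PX b \<theta> (Suc t)) =
     bind_pmf (step_pmf PX b \<theta>)
       (\<lambda>(s, x, y). map_pmf (prepend y) (map_pmf (past_and_current t) (run PX b t (s + y - x))))"
    unfolding traj_Suc map_bind_pmf using Suc.hyps
    by (intro bind_pmf_cong refl) (auto simp: map_pmf_comp past_and_current_Cons prepend_def)
  also have "\<dots> = bind_pmf (map_pmf (\<lambda>(s, x, y). (y, s + y - x)) (step_pmf PX b \<theta>))
       (\<lambda>(y, s). map_pmf (prepend y) (map_pmf (past_and_current t) (run PX b t s)))"
    by (simp add: bind_map_pmf case_prod_beta split_beta')
  also have "\<dots> = bind_pmf PX (\<lambda>y. map_pmf (prepend y) (map_pmf (past_and_current t) (traj PX b \<theta> t)))"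
    unfolding indep pair_pmf_def traj_def
    by (simp add: bind_assoc_pmf bind_return_pmf map_bind_pmf)
  also have "\<dots> = pair_pmf (bind_pmf PX (\<lambda>y. map_pmf ((#) y) D)) (step_pmf PX b \<theta>)"
    unfolding D pair_pmf_def prepend_def
    by (simp add: bind_assoc_pmf bind_return_pmf map_bind_pmf bind_map_pmf)
  finally show ?case by blast
qed

lemma prob_current_given_past:
  assumes D: "map_pmf (past_and_current t) (traj PX b \<theta> t) = pair_pmf D (step_pmf PX b \<theta>)"
    and pos: "measure_pmf.prob (traj PX b \<theta> t) {tr. Ypast t tr = ys} > 0"
  shows "measure_pmf.prob (traj PX b \<theta> t) {tr. P (tr ! (t - 1)) \<and> Ypast t tr = ys}
       / measure_pmf.prob (traj PX b \<theta> t) {tr. Ypast t tr = ys}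
       = measure_pmf.prob (step_pmf PX b \<theta>) {j. P j}"
proof -
  have joint: "measure_pmf.prob (traj PX b \<theta> t) {tr. Q (tr ! (t - 1)) \<and> Ypast t tr = ys} =
      measure_pmf.prob D {ys} * measure_pmf.prob (step_pmf PX b \<theta>) {j. Q j}" for Q
  proof -
    have "{tr. Q (tr ! (t - 1)) \<and> Ypast t tr = ys} = past_and_current t -` ({ys} \<times> {j. Q j})"
      by (auto simp: past_and_current_def)
    then have "measure_pmf.prob (traj PX b \<theta> t) {tr. Q (tr ! (t - 1)) \<and> Ypast t tr = ys} =
        measure_pmf.prob (map_pmf (past_and_current t) (traj PX b \<theta> t)) ({ys} \<times> {j. Q j})"
      by simp
    then show ?thesis
      by (simp add: D measure_pmf_prob_product)
  qed
  from joint[of P] joint[of "\<lambda>_. True"] pos show ?thesis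
    by simp
qed

theorem lemma8:
  fixes mx my ms :: nat and PX \<theta> :: "int pmf" and b :: "int \<Rightarrow> int pmf"
  assumes "mx \<le> my"
    and "set_pmf PX \<subseteq> {0..int mx}"
    and "set_pmf \<theta> \<subseteq> {0..int ms}"
    and "structured_policy mx my ms PX \<theta> b"
  shows "invariant_policy PX b \<theta>"
  unfolding invariant_policy_def
proof (intro allI impI conjI)
  fix t :: nat and ys :: "int list"
  assume "t \<ge> 1" and pos: "measure_pmf.prob (traj PX b \<theta> t) {tr. Ypast t tr = ys} > 0"
  then obtain D where D: "map_pmf (past_and_current t) (traj PX b \<theta> t) = pair_pmf D (step_pmf PX b \<theta>)"
    using past_independent_of_current[OF structured_policy_output_next_state[OF assms]] by blast
  note cond = prob_current_given_past[OF D pos]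
  show "theta_t PX b \<theta> t ys s = pmf \<theta> s" for s
    using cond[of "\<lambda>j. fst j = s"] arg_cong[OF map_step_pmf_state, of "\<lambda>M. pmf M s"]
    by (simp add: theta_t_def S_at_def pmf_map vimage_def)
  show "xi_t PX b \<theta> t ys w = xi PX \<theta> w" for w
    using cond[of "\<lambda>(s, x, y). s - x = w"] arg_cong[OF map_step_pmf_net_state, of "\<lambda>M. pmf M w"]
    by (simp add: xi_t_def W_at_def pmf_map vimage_def case_prod_beta pmf_xi_pmf)
qed

end
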